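(* Let $(r,\ell)$ be a $\mathcal C^1$ solution of system (D) on $[0,t_* )\times\mathbb R$. Then for all $t\in[0,t_* )$ and $\alpha,\beta\in\mathbb R$, $$c_1(t,\alpha)=\sqrt{\frac{k\big(r_0(\alpha)-\ell(t,x_1(t,\alpha))\big)}{k(2r_0(\alpha))}}\Big\{1+r_0'(\alpha)\sqrt{k(2r_0(\alpha))}\int_0^t f\big(r_0(\alpha)-\ell(\tau,x_1(\tau,\alpha))\big)\,d\tau\Big\},$$ $$c_2(t,\beta)=\sqrt{\frac{k\big(r(t,x_2(t,\beta))-\ell_0(\beta)\big)}{k(2r_0(\beta))}}\Big\{1+\ell_0'(\beta)\sqrt{k(2r_0(\beta))}\int_0^t f\big(r(\tau,x_2(\tau,\beta))-\ell_0(\beta)\big)\,d\tau\Big\}.$$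
   Context: Let $Q(\xi):=\sqrt{1+\xi^2}$, $L(u):=\tfrac12(u\sqrt{1+u^2}+\operatorname{arcsinh}u)$ (so $L'=Q$, $L$ an odd increasing bijection of $\mathbb R$), and $k(\eta):=Q(L^{-1}(-\eta/2))$, so $k$ is even, smooth, $k\ge k(0)=1$. Set $f(\eta):=k'(\eta)/\sqrt{k(\eta)}$. Given $w_0\in\mathcal C^2(\mathbb R)$ with $w_0'$ bounded and non-constant, let $r_0:=-L(w_0')$ and $\ell_0:=L(w_0')=-r_0$. System (D) is: $r_{,t}+k(r-\ell)r_{,x}=0$, $\ell_{,t}-k(r-\ell)\ell_{,x}=0$ on $[0,t_* )\times\mathbb R$, $r(0,\cdot)=r_0$, $\ell(0,\cdot)=\ell_0$, where $[0,t_* )$ is the maximal interval of existence of the $\mathcal C^1$ solution. Forward characteristics $x_1(t,\alpha)$ solve $\partial_t x_1=k\big((r-\ell)(t,x_1)\big)$, $x_1(0,\alpha)=\alpha$; backward characteristics $x_2(t,\beta)$ solve $\partial_tx_2=-k\big((r-\ell)(t,x_2)\big)$, $x_2(0,\beta)=\beta$. Along them $r(t,x_1(t,\alpha))=r_0(\alpha)$ and $\ell(t,x_2(t,\beta))=\ell_0(\beta)$. The infinitesimal compression ratios are $c_1(t,\alpha):=\partial x_1/\partial\alpha$ and $c_2(t,\beta):=\partial x_2/\partial\beta$. *)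

theory Defs
  imports "HOL-Analysis.Analysis" "HOL-Library.Extended_Real"
begin

definition Q_fun :: "real \<Rightarrow> real" where
  "Q_fun \<xi> = sqrt (1 + \<xi>\<^sup>2)"

definition L_fun :: "real \<Rightarrow> real" where
  "L_fun u = (u * sqrt (1 + u\<^sup>2) + arsinh u) / 2"

(* k(eta) = Q(L^{-1}(-eta/2)); L is a bijection of R, so inv L_fun is its inverse *)
definition k_fun :: "real \<Rightarrow> real" where
  "k_fun \<eta> = Q_fun (inv L_fun (- \<eta> / 2))"

definition f_fun :: "real \<Rightarrow> real" where
  "f_fun \<eta> = deriv k_fun \<eta> / sqrt (k_fun \<eta>)"

definition Dom :: "ereal \<Rightarrow> real set" where
  "Dom T = {s. 0 \<le> s \<and> ereal s < T}"

(* (r,l) is a C^1 solution of system (D) on [0,T) x R with initial data r0, l0.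
   C^1 is expressed by continuous partial derivatives giving the (Frechet) derivative. *)
definition solD :: "(real \<Rightarrow> real) \<Rightarrow> (real \<Rightarrow> real) \<Rightarrow> ereal
     \<Rightarrow> (real \<Rightarrow> real \<Rightarrow> real) \<Rightarrow> (real \<Rightarrow> real \<Rightarrow> real) \<Rightarrow> bool" where
  "solD r0 l0 T r l \<longleftrightarrow>
     (\<exists>rt rx lt lx.
        continuous_on (Dom T \<times> UNIV) rt \<and> continuous_on (Dom T \<times> UNIV) rx \<and>
        continuous_on (Dom T \<times> UNIV) lt \<and> continuous_on (Dom T \<times> UNIV) lx \<and>
        (\<forall>p \<in> Dom T \<times> UNIV.
           ((\<lambda>q. r (fst q) (snd q)) has_derivative (\<lambda>h. rt p * fst h + rx p * snd h))
              (at p within Dom T \<times> UNIV) \<and>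
           ((\<lambda>q. l (fst q) (snd q)) has_derivative (\<lambda>h. lt p * fst h + lx p * snd h))
              (at p within Dom T \<times> UNIV) \<and>
           rt p + k_fun (r (fst p) (snd p) - l (fst p) (snd p)) * rx p = 0 \<and>
           lt p - k_fun (r (fst p) (snd p) - l (fst p) (snd p)) * lx p = 0)) \<and>
     (\<forall>x. r 0 x = r0 x \<and> l 0 x = l0 x)"

end

theory Submission
  imports Defs
begin

(*
  Along a forward characteristic r is constant, equal to r0(alpha), so x1(., alpha) solves the
  scalar equation x' = k(r0(alpha) - l(t, x)), which depends on alpha only through its initial
  point and through r0(alpha). Differentiating in alpha gives the linear equation
  c' = k'(eta) (r0'(alpha) - l_x c), c(0) = 1, where eta = r0(alpha) - l along the characteristic;
  since eta' = -2 k(eta) l_x, its solution is the closed formula of the theorem. To make this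
  rigorous, the remainder x1(t, alpha + h) - x1(t, alpha) - h c(t) is shown to satisfy a linear
  differential inequality with o(h) forcing (uniform linearisation of l and k on compact sets),
  and Gronwall's inequality, with a continuation argument keeping the remainder below |h|, makes
  it o(h). Backward characteristics become forward ones under x -> -x, which swaps r and l;
  k is even and f is odd.
*)

section \<open>The functions \<open>L\<close>, \<open>k\<close> and \<open>f\<close>\<close>

lemma L_fun_has_real_derivative: "(L_fun has_real_derivative Q_fun u) (at u)"
proof -
  have pos: "0 < 1 + u\<^sup>2"
    by (simp add: add_pos_nonneg)
  have sq: "sqrt (1 + u\<^sup>2) * sqrt (1 + u\<^sup>2) = 1 + u\<^sup>2"
    using pos by simp
  show ?thesis
    unfolding L_fun_def[abs_def] Q_fun_def using pos
    by (auto intro!: derivative_eq_intros arsinh_real_has_field_derivative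
        simp: add.commute divide_simps sq) (simp add: power2_eq_square algebra_simps)
qed

lemma Q_fun_ge_1: "1 \<le> Q_fun u"
  by (simp add: Q_fun_def)

lemma L_fun_minus: "L_fun (- u) = - L_fun u"
  by (simp add: L_fun_def field_simps)

lemma L_fun_ge_half: "0 \<le> u \<Longrightarrow> u / 2 \<le> L_fun u"
proof -
  assume u: "0 \<le> u"
  have "u \<le> u * sqrt (1 + u\<^sup>2)"
    using u mult_left_mono[of 1 "sqrt (1 + u\<^sup>2)" u] by simp
  moreover have "0 \<le> arsinh u"
    using u arsinh_real_neg_iff[of u] by linarith
  ultimately show ?thesis
    by (simp add: L_fun_def)
qed

lemma isCont_L_fun: "isCont L_fun u"
  using L_fun_has_real_derivative by (rule DERIV_isCont)

lemma strict_mono_L_fun: "strict_mono L_fun"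
proof -
  have "\<exists>D. (L_fun has_real_derivative D) (at x) \<and> 0 < D" for x
    using L_fun_has_real_derivative Q_fun_ge_1 by (meson less_le_trans zero_less_one)
  then show ?thesis
    by (metis DERIV_pos_imp_increasing strict_monoI)
qed

lemma surj_L_fun: "surj L_fun"
proof -
  have "\<exists>x. L_fun x = y" for y
  proof -
    have "L_fun (- 2 * \<bar>y\<bar>) \<le> y" "y \<le> L_fun (2 * \<bar>y\<bar>)"
      using L_fun_ge_half[of "2 * \<bar>y\<bar>"] L_fun_minus[of "2 * \<bar>y\<bar>"] by auto
    then show ?thesis
      using IVT[of L_fun "- 2 * \<bar>y\<bar>" y "2 * \<bar>y\<bar>"] isCont_L_fun by auto
  qed
  then show ?thesis
    by (metis surjI)
qed

lemma L_fun_inv [simp]: "L_fun (inv L_fun y) = y"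
  by (rule surj_f_inv_f[OF surj_L_fun])

lemma inv_L_fun [simp]: "inv L_fun (L_fun x) = x"
  by (rule inv_f_f[OF strict_mono_imp_inj_on[OF strict_mono_L_fun]])

lemma inv_L_fun_minus: "inv L_fun (- y) = - inv L_fun y"
  by (metis L_fun_inv L_fun_minus inv_L_fun)

lemma inv_L_fun_has_real_derivative:
  "(inv L_fun has_real_derivative inverse (Q_fun (inv L_fun y))) (at y)"
proof (rule DERIV_inverse_function[where a="y - 1" and b="y + 1"])
  show "(L_fun has_real_derivative Q_fun (inv L_fun y)) (at (inv L_fun y))"
    by (rule L_fun_has_real_derivative)
  show "Q_fun (inv L_fun y) \<noteq> 0"
    using Q_fun_ge_1[of "inv L_fun y"] by linarith
  have "isCont (inv L_fun) (L_fun (inv L_fun y))"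
    by (rule isCont_inverse_function[of 1]) (simp_all add: isCont_L_fun)
  then show "isCont (inv L_fun) y"
    by simp
qed simp_all

lemma Q_fun_has_real_derivative: "(Q_fun has_real_derivative u / Q_fun u) (at u)"
proof -
  have "((\<lambda>x. 1 + x\<^sup>2) has_real_derivative 2 * u) (at u)"
    by (auto intro!: derivative_eq_intros)
  from DERIV_chain2[OF DERIV_real_sqrt this]
  show ?thesis
    by (simp add: Q_fun_def[abs_def] add_pos_nonneg field_simps)
qed

lemma k_fun_has_real_derivative:
  "(k_fun has_real_derivative
     - inv L_fun (- \<eta> / 2) / (2 * (1 + (inv L_fun (- \<eta> / 2))\<^sup>2))) (at \<eta>)"
proof -
  define v where "v = inv L_fun (- \<eta> / 2)"
  have "((\<lambda>\<eta>. inv L_fun (- \<eta> / 2)) has_real_derivative inverse (Q_fun v) * (- 1 / 2)) (at \<eta>)"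
    unfolding v_def by (rule DERIV_chain2[OF inv_L_fun_has_real_derivative]) (auto intro!: derivative_eq_intros)
  from DERIV_chain2[OF Q_fun_has_real_derivative this]
  have "(k_fun has_real_derivative v / Q_fun v * (inverse (Q_fun v) * (- 1 / 2))) (at \<eta>)"
    by (simp add: k_fun_def[abs_def] v_def)
  moreover have "v / Q_fun v * (inverse (Q_fun v) * (- 1 / 2)) = - v / (2 * (1 + v\<^sup>2))"
    by (simp add: Q_fun_def add_pos_nonneg field_simps)
  ultimately show ?thesis
    by (simp add: v_def)
qed

lemma deriv_k_fun:
  "deriv k_fun \<eta> = - inv L_fun (- \<eta> / 2) / (2 * (1 + (inv L_fun (- \<eta> / 2))\<^sup>2))"
  using k_fun_has_real_derivative DERIV_imp_deriv by blast

lemma k_fun_has_deriv: "(k_fun has_real_derivative deriv k_fun \<eta>) (at \<eta>)"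
  unfolding deriv_k_fun by (rule k_fun_has_real_derivative)

lemma continuous_on_k_fun: "continuous_on A k_fun"
  using k_fun_has_deriv by (meson DERIV_isCont continuous_at_imp_continuous_on)

lemma continuous_on_deriv_k_fun: "continuous_on A (deriv k_fun)"
proof -
  have "continuous_on UNIV (inv L_fun)"
    using inv_L_fun_has_real_derivative by (meson DERIV_isCont continuous_at_imp_continuous_on)
  then have "continuous_on A (\<lambda>\<eta>. inv L_fun (- \<eta> / 2))"
    by (rule continuous_on_compose2) (auto intro!: continuous_intros)
  moreover have "2 * (1 + (inv L_fun (- \<eta> / 2))\<^sup>2) \<noteq> 0" for \<eta>
    using add_pos_nonneg[OF zero_less_one zero_le_power2[of "inv L_fun (- \<eta> / 2)"]] by simp
  ultimately show ?thesis
    unfolding deriv_k_fun[abs_def] by (intro continuous_intros) auto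
qed

lemma k_fun_ge_1: "1 \<le> k_fun \<eta>"
  by (simp add: k_fun_def Q_fun_ge_1)

lemma k_fun_minus: "k_fun (- \<eta>) = k_fun \<eta>"
  by (simp add: k_fun_def Q_fun_def inv_L_fun_minus)

lemma f_fun_minus: "f_fun (- \<eta>) = - f_fun \<eta>"
  by (simp add: f_fun_def deriv_k_fun k_fun_minus inv_L_fun_minus)

lemma k_fun_diff_commute: "k_fun (a - b) = k_fun (b - a)"
  using k_fun_minus[of "b - a"] by simp

lemma f_fun_diff_commute: "f_fun (a - b) = - f_fun (b - a)"
  using f_fun_minus[of "b - a"] by simp

lemma continuous_on_f_fun: "continuous_on A f_fun"
proof -
  have "sqrt (k_fun \<eta>) \<noteq> 0" for \<eta>
    using k_fun_ge_1[of \<eta>] by simp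
  then show ?thesis
    unfolding f_fun_def[abs_def]
    by (intro continuous_intros continuous_on_deriv_k_fun continuous_on_k_fun) auto
qed

section \<open>Gronwall estimates\<close>

lemma gronwall_lyapunov:
  fixes E E' :: "real \<Rightarrow> real"
  assumes A: "0 \<le> A" and E_deriv: "\<And>s. s \<in> {0..T} \<Longrightarrow> (E has_real_derivative E' s) (at s within {0..T})"
    and E'_bound: "\<And>s. s \<in> {0..T} \<Longrightarrow> \<bar>E' s\<bar> \<le> A * \<bar>E s\<bar> + B"
    and s: "s \<in> {0..T}"
  defines "c \<equiv> 2 * A + 1"
  shows "exp (- c * s) * ((E s)\<^sup>2 + B\<^sup>2 / c) \<le> (E 0)\<^sup>2 + B\<^sup>2 / c"
proof -
  have c: "1 \<le> c"
    using A by (simp add: c_def)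
  \<comment> \<open>nonincreasing because \<open>2 E E' \<le> c E\<^sup>2 + B\<^sup>2\<close>\<close>
  define v where "v x = exp (- c * x) * ((E x)\<^sup>2 + B\<^sup>2 / c)" for x
  have v_deriv: "(v has_real_derivative exp (- c * x) * (2 * E x * E' x - c * (E x)\<^sup>2 - B\<^sup>2))
      (at x within {0..T})" if "x \<in> {0..T}" for x
  proof -
    have "((\<lambda>x. exp (- c * x)) has_real_derivative exp (- c * x) * (- c)) (at x within {0..T})"
      by (auto intro!: derivative_eq_intros)
    moreover have "((\<lambda>x. (E x)\<^sup>2 + B\<^sup>2 / c) has_real_derivative 2 * E x * E' x) (at x within {0..T})"
      by (auto intro!: derivative_eq_intros E_deriv[OF that])
    ultimately have "(v has_real_derivative
        exp (- c * x) * (- c) * ((E x)\<^sup>2 + B\<^sup>2 / c) + 2 * E x * E' x * exp (- c * x))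
        (at x within {0..T})"
      unfolding v_def[abs_def] by (rule DERIV_mult)
    moreover have "exp (- c * x) * (- c) * ((E x)\<^sup>2 + B\<^sup>2 / c) + 2 * E x * E' x * exp (- c * x)
        = exp (- c * x) * (2 * E x * E' x - c * (E x)\<^sup>2 - B\<^sup>2)"
      using c by (simp add: field_simps)
    ultimately show ?thesis
      by simp
  qed
  have v'_nonpos: "2 * E x * E' x - c * (E x)\<^sup>2 - B\<^sup>2 \<le> 0" if "x \<in> {0..T}" for x
  proof -
    have "E x * E' x \<le> \<bar>E x\<bar> * \<bar>E' x\<bar>"
      using abs_ge_self[of "E x * E' x"] by (simp add: abs_mult)
    also have "\<dots> \<le> \<bar>E x\<bar> * (A * \<bar>E x\<bar> + B)"
      using E'_bound[OF that] by (rule mult_left_mono) simp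
    finally have "2 * E x * E' x \<le> 2 * \<bar>E x\<bar> * (A * \<bar>E x\<bar> + B)"
      by simp
    moreover have "2 * \<bar>E x\<bar> * B \<le> (E x)\<^sup>2 + B\<^sup>2"
      using sum_squares_bound[of "\<bar>E x\<bar>" B] by (simp add: mult.commute)
    ultimately show ?thesis
      by (simp add: c_def algebra_simps power2_eq_square)
  qed
  have "v s \<le> v 0"
  proof (rule DERIV_nonpos_imp_decreasing_open[of 0 s v])
    show "0 \<le> s"
      using s by simp
    show "continuous_on {0..s} v"
      using s by (intro continuous_on_subset[OF DERIV_continuous_on[OF v_deriv]]) auto
    fix x assume x: "0 < x" "x < s"
    then have "at x within {0..T} = at x"
      using s by (intro at_within_Icc_at) auto
    moreover have "exp (- c * x) * (2 * E x * E' x - c * (E x)\<^sup>2 - B\<^sup>2) \<le> 0"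
      using x s v'_nonpos[of x] by (intro mult_nonneg_nonpos) auto
    ultimately show "\<exists>D. (v has_real_derivative D) (at x) \<and> D \<le> 0"
      using x s v_deriv[of x] by auto
  qed
  then show ?thesis
    by (simp add: v_def)
qed

lemma gronwall_abs_bound:
  fixes E E' :: "real \<Rightarrow> real"
  assumes A: "0 \<le> A" and B: "0 \<le> B" and E0: "E 0 = 0"
    and E_deriv: "\<And>s. s \<in> {0..T} \<Longrightarrow> (E has_real_derivative E' s) (at s within {0..T})"
    and E'_bound: "\<And>s. s \<in> {0..T} \<Longrightarrow> \<bar>E' s\<bar> \<le> A * \<bar>E s\<bar> + B"
    and s: "s \<in> {0..T}"
  shows "\<bar>E s\<bar> \<le> exp ((2 * A + 1) * T) * B"
proof -
  define c where "c = 2 * A + 1"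
  have c: "1 \<le> c"
    using A by (simp add: c_def)
  have "exp (- c * s) * ((E s)\<^sup>2 + B\<^sup>2 / c) \<le> B\<^sup>2 / c"
    using gronwall_lyapunov[OF A E_deriv E'_bound s] E0 by (simp add: c_def)
  then have "(E s)\<^sup>2 + B\<^sup>2 / c \<le> exp (c * s) * (B\<^sup>2 / c)"
    by (simp add: exp_minus field_simps)
  also have "\<dots> \<le> exp (c * s) * B\<^sup>2"
  proof -
    have "B\<^sup>2 \<le> B\<^sup>2 * c"
      using c mult_left_mono[of 1 c "B\<^sup>2"] by simp
    then show ?thesis
      using c by (intro mult_left_mono) (simp_all add: divide_le_eq)
  qed
  also have "\<dots> \<le> (exp (c * T) * B)\<^sup>2"
  proof -
    have "exp (c * s) \<le> exp (c * T) * exp (c * T)"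
      using s c by (simp flip: exp_add)
    from mult_right_mono[OF this, of "B\<^sup>2"] show ?thesis
      by (simp add: power2_eq_square algebra_simps)
  qed
  finally have "(E s)\<^sup>2 \<le> (exp (c * T) * B)\<^sup>2"
    using c by (simp add: add_increasing2 order_trans[rotated])
  then have "\<bar>E s\<bar> \<le> \<bar>exp (c * T) * B\<bar>"
    by (simp only: abs_le_square_iff)
  then show ?thesis
    using B by (simp add: c_def)
qed

lemma gronwall_continuation:
  fixes E E' :: "real \<Rightarrow> real"
  assumes A: "0 \<le> A" and B: "0 \<le> B" and E0: "E 0 = 0"
    and E_deriv: "\<And>s. s \<in> {0..T} \<Longrightarrow> (E has_real_derivative E' s) (at s within {0..T})"
    and E'_bound: "\<And>s. s \<in> {0..T} \<Longrightarrow> \<bar>E s\<bar> \<le> \<rho> \<Longrightarrow> \<bar>E' s\<bar> \<le> A * \<bar>E s\<bar> + B"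
    and small: "exp ((2 * A + 1) * T) * B < \<rho>"
    and s: "s \<in> {0..T}"
  shows "\<bar>E s\<bar> \<le> exp ((2 * A + 1) * T) * B"
proof -
  have "0 < \<rho>"
    using B small by (meson exp_ge_zero le_less_trans mult_nonneg_nonneg)
  have bound_upto: "\<bar>E s\<bar> \<le> exp ((2 * A + 1) * T) * B"
    if T': "T' \<in> {0..T}" and below: "\<forall>x\<in>{0..T'}. \<bar>E x\<bar> \<le> \<rho>" and s: "s \<in> {0..T'}" for T' s
  proof -
    have "\<bar>E s\<bar> \<le> exp ((2 * A + 1) * T') * B"
      using T' below s
      by (intro gronwall_abs_bound[where E=E and E'=E' and T=T' and A=A and B=B] A B E0)
         (auto intro: E'_bound has_field_derivative_subset[OF E_deriv])
    also have "\<dots> \<le> exp ((2 * A + 1) * T) * B"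
      using A B T' by (intro mult_right_mono) auto
    finally show ?thesis .
  qed
  have "\<bar>E x\<bar> \<le> \<rho>" if "x \<in> {0..T}" for x
  proof (rule ccontr)
    assume "\<not> \<bar>E x\<bar> \<le> \<rho>"
    \<comment> \<open>the first time \<open>\<bar>E\<bar>\<close> reaches \<open>\<rho>\<close>, where the Gronwall bound already forces \<open>\<bar>E\<bar> < \<rho>\<close>\<close>
    define X where "X = {0..T} \<inter> (\<lambda>x. \<bar>E x\<bar>) -` {\<rho>..}"
    have E_cont: "continuous_on {0..T} E"
      using E_deriv by (rule DERIV_continuous_on)
    have "closed X"
      unfolding X_def using E_cont by (intro continuous_closed_preimage) (auto intro: continuous_intros)
    moreover have "bounded X"
      by (rule bounded_subset[of "{0..T}"]) (auto simp: X_def)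
    ultimately have "compact X"
      by (simp add: compact_eq_bounded_closed)
    have "x \<in> X"
      using that \<open>\<not> \<bar>E x\<bar> \<le> \<rho>\<close> by (simp add: X_def)
    then obtain t where t: "t \<in> X" and t_min: "\<And>y. y \<in> X \<Longrightarrow> t \<le> y"
      using compact_attains_inf[OF \<open>compact X\<close>] by blast
    have "\<exists>y. 0 \<le> y \<and> y \<le> t \<and> \<bar>E y\<bar> = \<rho>"
      using t E0 \<open>0 < \<rho>\<close> by (intro IVT') (auto simp: X_def intro!: continuous_intros continuous_on_subset[OF E_cont])
    then obtain y where y: "0 \<le> y" "y \<le> t" "\<bar>E y\<bar> = \<rho>"
      by blast
    then have "y = t"
      using t t_min[of y] by (auto simp: X_def)
    have "\<forall>x\<in>{0..t}. \<bar>E x\<bar> \<le> \<rho>"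
      using t t_min y \<open>y = t\<close> by (force simp: X_def not_le)
    then have "\<bar>E t\<bar> < \<rho>"
      using bound_upto[of t t] t small by (force simp: X_def)
    then show False
      using t by (simp add: X_def)
  qed
  then show ?thesis
    using bound_upto[of T s] s by auto
qed

definition has_partial_derivatives_on ::
    "(real \<Rightarrow> real \<Rightarrow> real) \<Rightarrow> (real \<times> real \<Rightarrow> real) \<Rightarrow> (real \<times> real \<Rightarrow> real) \<Rightarrow> real set \<Rightarrow> bool"
  where "has_partial_derivatives_on F Ft Fx S \<longleftrightarrow>
    (\<forall>p \<in> S \<times> UNIV. ((\<lambda>q. F (fst q) (snd q)) has_derivative (\<lambda>h. Ft p * fst h + Fx p * snd h))
       (at p within S \<times> UNIV))"

lemma has_partial_derivatives_onD:
  "has_partial_derivatives_on F Ft Fx S \<Longrightarrow> p \<in> S \<times> UNIV \<Longrightarrow>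
    ((\<lambda>q. F (fst q) (snd q)) has_derivative (\<lambda>h. Ft p * fst h + Fx p * snd h)) (at p within S \<times> UNIV)"
  unfolding has_partial_derivatives_on_def by blast

lemma has_partial_derivatives_on_compose:
  assumes "has_partial_derivatives_on F Ft Fx S" and "\<gamma> ` T \<subseteq> S \<times> UNIV" "x \<in> T"
    and "(\<gamma> has_derivative \<gamma>') (at x within T)"
  shows "((\<lambda>x. F (fst (\<gamma> x)) (snd (\<gamma> x))) has_derivative
      (\<lambda>h. Ft (\<gamma> x) * fst (\<gamma>' h) + Fx (\<gamma> x) * snd (\<gamma>' h))) (at x within T)"
  using has_derivative_in_compose2[of "S \<times> UNIV" "\<lambda>q. F (fst q) (snd q)"
      "\<lambda>p h. Ft p * fst h + Fx p * snd h", OF has_partial_derivatives_onD[OF assms(1)]] assms(2-)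
  by blast

lemma has_partial_derivatives_on_subset:
  "has_partial_derivatives_on F Ft Fx S \<Longrightarrow> T \<subseteq> S \<Longrightarrow> has_partial_derivatives_on F Ft Fx T"
  unfolding has_partial_derivatives_on_def by (blast intro: has_derivative_subset)

lemma has_partial_derivatives_on_curve:
  assumes F: "has_partial_derivatives_on F Ft Fx S"
    and Y: "(Y has_real_derivative Y') (at s within S)" and s: "s \<in> S"
  shows "((\<lambda>s. F s (Y s)) has_real_derivative Ft (s, Y s) + Fx (s, Y s) * Y') (at s within S)"
proof -
  have "((\<lambda>s. (s, Y s)) has_derivative (\<lambda>h. (h, Y' * h))) (at s within S)"
    using has_derivative_Pair[OF has_derivative_ident Y[unfolded has_field_derivative_def]] by simp
  from has_partial_derivatives_on_compose[OF F _ s this]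
  show ?thesis
    unfolding has_field_derivative_def fst_conv snd_conv
    by (rule has_derivative_eq_rhs) (auto simp: fun_eq_iff algebra_simps)
qed

lemma has_partial_derivatives_on_slice:
  assumes F: "has_partial_derivatives_on F Ft Fx S" and s: "s \<in> S"
  shows "(F s has_real_derivative Fx (s, x)) (at x)"
proof -
  have "((\<lambda>x. (s, x)) has_derivative (\<lambda>h. (0, h))) (at x)"
    by (auto intro!: derivative_eq_intros)
  from has_partial_derivatives_on_compose[OF F _ UNIV_I this]
  have "(F s has_derivative (\<lambda>h. Ft (s, x) * 0 + Fx (s, x) * h)) (at x)"
    using s by auto
  then show ?thesis
    unfolding has_field_derivative_def by (rule has_derivative_eq_rhs) (auto simp: fun_eq_iff)
qed

lemma has_partial_derivatives_on_reflect:
  assumes "has_partial_derivatives_on F Ft Fx S"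
  shows "has_partial_derivatives_on (\<lambda>s x. F s (- x))
    (\<lambda>p. Ft (fst p, - snd p)) (\<lambda>p. - Fx (fst p, - snd p)) S"
  unfolding has_partial_derivatives_on_def
proof
  fix p :: "real \<times> real" assume p: "p \<in> S \<times> UNIV"
  have "((\<lambda>q. (fst q, - snd q)) has_derivative (\<lambda>h. (fst h, - snd h))) (at p within S \<times> UNIV)"
    by (auto intro!: derivative_eq_intros)
  moreover have "(\<lambda>q. (fst q, - snd q)) ` (S \<times> UNIV) \<subseteq> S \<times> UNIV"
    by auto
  ultimately have "((\<lambda>q. F (fst (fst q, - snd q)) (snd (fst q, - snd q))) has_derivative
      (\<lambda>h. Ft (fst p, - snd p) * fst (fst h, - snd h) + Fx (fst p, - snd p) * snd (fst h, - snd h)))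
      (at p within S \<times> UNIV)"
    using has_partial_derivatives_on_compose[OF assms _ p] by blast
  then show "((\<lambda>q. F (fst q) (- snd q)) has_derivative
      (\<lambda>h. Ft (fst p, - snd p) * fst h + - Fx (fst p, - snd p) * snd h)) (at p within S \<times> UNIV)"
    by simp
qed

lemma uniform_linearization:
  fixes F :: "real \<Rightarrow> real \<Rightarrow> real" and Fx :: "real \<times> real \<Rightarrow> real"
  assumes S: "compact S"
    and F_deriv: "\<And>s x. s \<in> S \<Longrightarrow> (F s has_real_derivative Fx (s, x)) (at x)"
    and Fx_cont: "continuous_on (S \<times> UNIV) Fx" and \<epsilon>: "0 < \<epsilon>"
  obtains \<delta> where "0 < \<delta>"
    "\<And>s z y. s \<in> S \<Longrightarrow> \<bar>z\<bar> \<le> N \<Longrightarrow> \<bar>y - z\<bar> < \<delta> \<Longrightarrow>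
       \<bar>F s y - F s z - Fx (s, z) * (y - z)\<bar> \<le> \<epsilon> * \<bar>y - z\<bar>"
proof -
  define K where "K = S \<times> cball (0::real) (\<bar>N\<bar> + 1)"
  have "uniformly_continuous_on K Fx"
    unfolding K_def using S
    by (intro compact_uniformly_continuous continuous_on_subset[OF Fx_cont] compact_Times) auto
  then obtain d where d: "0 < d"
    and close: "\<And>p p'. p \<in> K \<Longrightarrow> p' \<in> K \<Longrightarrow> dist p' p < d \<Longrightarrow> dist (Fx p') (Fx p) < \<epsilon>"
    unfolding uniformly_continuous_on_def using \<epsilon> by metis
  have "\<bar>F s y - F s z - Fx (s, z) * (y - z)\<bar> \<le> \<epsilon> * \<bar>y - z\<bar>"
    if s: "s \<in> S" and z: "\<bar>z\<bar> \<le> N" and yz: "\<bar>y - z\<bar> < min d 1" for s z y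
  proof -
    have F_deriv': "(F s has_derivative (\<lambda>h. Fx (s, x) * h)) (at x within A)" for x A
      using F_deriv[OF s, of x] unfolding has_field_derivative_def
      by (metis has_derivative_subset mult.commute top_greatest)
    obtain \<xi> where \<xi>: "\<bar>\<xi> - z\<bar> \<le> \<bar>y - z\<bar>" and mvt: "F s y - F s z = Fx (s, \<xi>) * (y - z)"
    proof (cases "z \<le> y")
      case True
      then obtain \<xi> where "\<xi> \<in> {z..y}" "F s y - F s z = Fx (s, \<xi>) * (y - z)"
        using mvt_very_simple[OF True, of "F s" "\<lambda>x h. Fx (s, x) * h"] F_deriv' by blast
      then show ?thesis
        using that[of \<xi>] by auto
    next
      case False
      then obtain \<xi> where "\<xi> \<in> {y..z}" "F s z - F s y = Fx (s, \<xi>) * (z - y)"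
        using mvt_very_simple[of y z "F s" "\<lambda>x h. Fx (s, x) * h"] F_deriv' by force
      then show ?thesis
        using that[of \<xi>] by (auto simp: algebra_simps)
    qed
    have "(s, \<xi>) \<in> K" "(s, z) \<in> K" "dist (s, \<xi>) (s, z) < d"
      using s z \<xi> yz by (auto simp: K_def dist_Pair_Pair dist_real_def)
    then have "\<bar>Fx (s, \<xi>) - Fx (s, z)\<bar> \<le> \<epsilon>"
      using close by (force simp: dist_real_def)
    then have "\<bar>Fx (s, \<xi>) - Fx (s, z)\<bar> * \<bar>y - z\<bar> \<le> \<epsilon> * \<bar>y - z\<bar>"
      by (rule mult_right_mono) simp
    then show ?thesis
      by (simp add: mvt abs_mult[symmetric] algebra_simps)
  qed
  then show ?thesis
    using that[of "min d 1"] d by auto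
qed

section \<open>Differentiability of characteristics in their foot point\<close>

lemma small_factor_exists:
  fixes \<Gamma> C \<epsilon> :: real
  assumes "0 < \<Gamma>" "0 \<le> C" "0 < \<epsilon>"
  obtains e where "0 < e" "e \<le> 1" "\<Gamma> * (e * C) \<le> min \<epsilon> 1 / 2"
proof -
  define m where "m = min \<epsilon> 1"
  have m: "0 < m"
    using assms by (simp add: m_def)
  have "\<Gamma> * (min 1 (m / (2 * \<Gamma> * (C + 1))) * C) \<le> \<Gamma> * (m / (2 * \<Gamma> * (C + 1)) * (C + 1))"
    using assms m by (intro mult_left_mono mult_mono) auto
  also have "\<dots> = m / 2"
    using assms by (simp add: add_nonneg_eq_0_iff)
  finally show ?thesis
    using that[of "min 1 (m / (2 * \<Gamma> * (C + 1)))"] assms m by (simp add: m_def add_pos_nonneg)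
qed

lemma compression_ratio_has_derivative:
  fixes \<eta> a :: "real \<Rightarrow> real" and D :: real
  assumes \<eta>_deriv: "\<And>s. s \<in> {0..t} \<Longrightarrow>
      (\<eta> has_real_derivative - (2 * k_fun (\<eta> s) * a s)) (at s within {0..t})"
    and s: "s \<in> {0..t}"
  defines "G \<equiv> \<lambda>s. sqrt (k_fun (\<eta> s) / k_fun (\<eta> 0)) *
      (1 + D * sqrt (k_fun (\<eta> 0)) * integral {0..s} (\<lambda>\<tau>. f_fun (\<eta> \<tau>)))"
  shows "(G has_real_derivative deriv k_fun (\<eta> s) * (D - a s * G s)) (at s within {0..t})"
proof -
  define k0 where "k0 = k_fun (\<eta> 0)"
  have k_pos: "0 < k_fun x" for x
    using k_fun_ge_1[of x] by linarith
  have "continuous_on {0..t} (\<lambda>s. f_fun (\<eta> s))"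
    using DERIV_continuous_on[OF \<eta>_deriv] by (rule continuous_on_compose2[OF continuous_on_f_fun]) auto
  then have I_deriv: "((\<lambda>s. integral {0..s} (\<lambda>\<tau>. f_fun (\<eta> \<tau>))) has_real_derivative f_fun (\<eta> s))
      (at s within {0..t})"
    unfolding has_real_derivative_iff_has_vector_derivative
    using s by (intro integral_has_vector_derivative) auto
  define P where "P s = sqrt (k_fun (\<eta> s))" for s
  define P' where "P' = inverse (P s) / 2 * (deriv k_fun (\<eta> s) * - (2 * k_fun (\<eta> s) * a s))"
  define W where "W s = 1 + D * sqrt k0 * integral {0..s} (\<lambda>\<tau>. f_fun (\<eta> \<tau>))" for s
  have "(P has_real_derivative P') (at s within {0..t})"
    unfolding P_def[abs_def] P'_def
    by (rule DERIV_chain2[OF DERIV_real_sqrt[OF k_pos] DERIV_chain2[OF k_fun_has_deriv \<eta>_deriv[OF s]]])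
  moreover have "(W has_real_derivative D * sqrt k0 * f_fun (\<eta> s)) (at s within {0..t})"
    unfolding W_def[abs_def] by (auto intro!: derivative_eq_intros I_deriv)
  ultimately have "((\<lambda>s. P s / sqrt k0 * W s) has_real_derivative
      P s / sqrt k0 * (D * sqrt k0 * f_fun (\<eta> s)) + P' / sqrt k0 * W s) (at s within {0..t})"
    by (intro DERIV_mult' DERIV_cdivide)
  moreover have "G = (\<lambda>s. P s / sqrt k0 * W s)"
    by (simp add: G_def P_def W_def k0_def real_sqrt_divide fun_eq_iff)
  moreover have "P s / sqrt k0 * (D * sqrt k0 * f_fun (\<eta> s)) + P' / sqrt k0 * W s
      = deriv k_fun (\<eta> s) * (D - a s * (P s / sqrt k0 * W s))"
  proof -
    have "0 < P s" "0 < sqrt k0"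
      using k_pos by (simp_all add: P_def k0_def)
    moreover have "P s * (P s * x) = k_fun (\<eta> s) * x" for x
      using k_pos[of "\<eta> s"] by (simp add: P_def flip: mult.assoc)
    ultimately show ?thesis
      unfolding P'_def f_fun_def P_def[symmetric] by (simp add: field_simps)
  qed
  ultimately show ?thesis
    by simp
qed

locale diagonal_system =
  fixes t :: real and R L :: "real \<Rightarrow> real \<Rightarrow> real" and Rt Rx Lt Lx :: "real \<times> real \<Rightarrow> real"
  assumes t_nonneg: "0 \<le> t"
    and R_partials: "has_partial_derivatives_on R Rt Rx {0..t}"
    and L_partials: "has_partial_derivatives_on L Lt Lx {0..t}"
    and Rx_cont: "continuous_on ({0..t} \<times> UNIV) Rx"
    and Lx_cont: "continuous_on ({0..t} \<times> UNIV) Lx"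
    and R_equation: "\<And>p. p \<in> {0..t} \<times> UNIV \<Longrightarrow>
      Rt p + k_fun (R (fst p) (snd p) - L (fst p) (snd p)) * Rx p = 0"
    and L_equation: "\<And>p. p \<in> {0..t} \<times> UNIV \<Longrightarrow>
      Lt p - k_fun (R (fst p) (snd p) - L (fst p) (snd p)) * Lx p = 0"

locale forward_characteristics = diagonal_system +
  fixes X :: "real \<Rightarrow> real \<Rightarrow> real"
  assumes X_init: "X 0 a = a"
    and X_deriv: "s \<in> {0..t} \<Longrightarrow>
      ((\<lambda>\<tau>. X \<tau> a) has_real_derivative k_fun (R s (X s a) - L s (X s a))) (at s within {0..t})"
begin

lemma R_along_characteristic: "s \<in> {0..t} \<Longrightarrow> R s (X s a) = R 0 a"
proof -
  have "\<exists>c. \<forall>s\<in>{0..t}. R s (X s a) = c"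
  proof (rule has_field_derivative_zero_constant)
    fix s assume s: "s \<in> {0..t}"
    have "Rt (s, X s a) + Rx (s, X s a) * k_fun (R s (X s a) - L s (X s a)) = 0"
      using R_equation[of "(s, X s a)"] s by (simp add: mult.commute)
    with has_partial_derivatives_on_curve[OF R_partials X_deriv[where a=a, OF s] s]
    show "((\<lambda>s. R s (X s a)) has_real_derivative 0) (at s within {0..t})"
      by simp
  qed simp
  then show "s \<in> {0..t} \<Longrightarrow> R s (X s a) = R 0 a"
    using t_nonneg X_init[of a] by force
qed

lemma X_deriv_R0: "s \<in> {0..t} \<Longrightarrow>
    ((\<lambda>\<tau>. X \<tau> a) has_real_derivative k_fun (R 0 a - L s (X s a))) (at s within {0..t})"
  using X_deriv R_along_characteristic by simp

end

locale forward_characteristic_at = forward_characteristics +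
  fixes \<alpha> D :: real
  assumes R0_deriv: "(R 0 has_real_derivative D) (at \<alpha>)"
begin

definition \<eta> :: "real \<Rightarrow> real" where
  "\<eta> s = R 0 \<alpha> - L s (X s \<alpha>)"

definition ratio :: "real \<Rightarrow> real" where
  "ratio s = sqrt (k_fun (\<eta> s) / k_fun (\<eta> 0)) *
     (1 + D * sqrt (k_fun (\<eta> 0)) * integral {0..s} (\<lambda>\<tau>. f_fun (\<eta> \<tau>)))"

definition err :: "real \<Rightarrow> real \<Rightarrow> real" where
  "err h s = X s (\<alpha> + h) - X s \<alpha> - h * ratio s"

definition err' :: "real \<Rightarrow> real \<Rightarrow> real" where
  "err' h s = k_fun (R 0 (\<alpha> + h) - L s (X s (\<alpha> + h))) - k_fun (\<eta> s)
     - h * deriv k_fun (\<eta> s) * (D - Lx (s, X s \<alpha>) * ratio s)"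

lemma \<eta>_deriv: "s \<in> {0..t} \<Longrightarrow>
    (\<eta> has_real_derivative - (2 * k_fun (\<eta> s) * Lx (s, X s \<alpha>))) (at s within {0..t})"
  using has_partial_derivatives_on_curve[OF L_partials X_deriv_R0 _, of s \<alpha>]
    L_equation[of "(s, X s \<alpha>)"] R_along_characteristic[of s \<alpha>]
  unfolding \<eta>_def[abs_def] by (auto intro!: derivative_eq_intros simp: algebra_simps)

lemma ratio_deriv: "s \<in> {0..t} \<Longrightarrow>
    (ratio has_real_derivative deriv k_fun (\<eta> s) * (D - Lx (s, X s \<alpha>) * ratio s)) (at s within {0..t})"
  unfolding ratio_def[abs_def] by (rule compression_ratio_has_derivative[OF \<eta>_deriv])

lemma err_deriv: "s \<in> {0..t} \<Longrightarrow> (err h has_real_derivative err' h s) (at s within {0..t})"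
  unfolding err_def[abs_def] err'_def
  by (auto intro!: derivative_eq_intros X_deriv_R0 ratio_deriv simp: \<eta>_def algebra_simps)

lemma err_init: "err h 0 = 0"
  using k_fun_ge_1[of "\<eta> 0"] by (simp add: err_def ratio_def X_init)

text \<open>Up to the first-order Taylor remainders of \<open>k\<close>, \<open>R 0\<close> and \<open>L s\<close>, the time derivative of
  \<open>err h\<close> is linear in \<open>err h\<close>; this is what makes Gronwall's inequality applicable.\<close>

lemma err'_eq:
  fixes h s :: real
  defines "y \<equiv> X s (\<alpha> + h)" and "z \<equiv> X s \<alpha>"
  defines "\<eta>\<^sub>h \<equiv> R 0 (\<alpha> + h) - L s y"
  shows "err' h s = (k_fun \<eta>\<^sub>h - k_fun (\<eta> s) - deriv k_fun (\<eta> s) * (\<eta>\<^sub>h - \<eta> s))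
    + deriv k_fun (\<eta> s) * ((R 0 (\<alpha> + h) - R 0 \<alpha> - D * h)
        - (L s y - L s z - Lx (s, z) * (y - z)) - Lx (s, z) * err h s)"
  by (simp add: err'_def err_def \<eta>_def y_def z_def \<eta>\<^sub>h_def algebra_simps)

lemma characteristic_increment_bounds:
  fixes h s :: real
  defines "y \<equiv> X s (\<alpha> + h)" and "z \<equiv> X s \<alpha>"
  defines "\<eta>\<^sub>h \<equiv> R 0 (\<alpha> + h) - L s y"
  assumes err_small: "\<bar>err h s\<bar> \<le> \<bar>h\<bar>"
    and M: "\<bar>Lx (s, z)\<bar> \<le> M" and G: "\<bar>ratio s\<bar> \<le> G" and e: "0 \<le> e" "e \<le> 1"
    and R_lin: "\<bar>R 0 (\<alpha> + h) - R 0 \<alpha> - D * h\<bar> \<le> e * \<bar>h\<bar>"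
    and L_lin: "\<bar>y - z\<bar> \<le> (1 + G) * \<bar>h\<bar> \<Longrightarrow>
      \<bar>L s y - L s z - Lx (s, z) * (y - z)\<bar> \<le> e * \<bar>y - z\<bar>"
  shows "\<bar>L s y - L s z - Lx (s, z) * (y - z)\<bar> \<le> e * ((1 + G) * \<bar>h\<bar>)"
    and "\<bar>\<eta>\<^sub>h - \<eta> s\<bar> \<le> ((1 + \<bar>D\<bar>) + (1 + G) * (1 + M)) * \<bar>h\<bar>"
proof -
  define \<rho>R where "\<rho>R = R 0 (\<alpha> + h) - R 0 \<alpha> - D * h"
  define \<rho>L where "\<rho>L = L s y - L s z - Lx (s, z) * (y - z)"
  have G0: "0 \<le> G" and M0: "0 \<le> M"
    using G M by (auto intro: order_trans[OF abs_ge_zero])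
  have "y - z = err h s + h * ratio s"
    by (simp add: err_def y_def z_def)
  moreover have "\<bar>h * ratio s\<bar> \<le> \<bar>h\<bar> * G"
    using G by (simp add: abs_mult mult_left_mono)
  ultimately have yz: "\<bar>y - z\<bar> \<le> (1 + G) * \<bar>h\<bar>"
    using err_small by (simp add: algebra_simps)
  show L_rem: "\<bar>L s y - L s z - Lx (s, z) * (y - z)\<bar> \<le> e * ((1 + G) * \<bar>h\<bar>)"
    using L_lin[OF yz] mult_left_mono[OF yz e(1)] by simp
  have "\<eta>\<^sub>h - \<eta> s = \<rho>R + D * h - \<rho>L - Lx (s, z) * (y - z)"
    by (simp add: \<eta>\<^sub>h_def \<eta>_def \<rho>R_def \<rho>L_def z_def)
  then have "\<bar>\<eta>\<^sub>h - \<eta> s\<bar> \<le> \<bar>\<rho>R\<bar> + \<bar>D * h\<bar> + \<bar>\<rho>L\<bar> + \<bar>Lx (s, z) * (y - z)\<bar>"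
    by arith
  moreover have "\<bar>Lx (s, z) * (y - z)\<bar> \<le> M * ((1 + G) * \<bar>h\<bar>)"
    unfolding abs_mult using M yz M0 by (intro mult_mono) auto
  moreover have "e * \<bar>h\<bar> \<le> \<bar>h\<bar>" "e * ((1 + G) * \<bar>h\<bar>) \<le> (1 + G) * \<bar>h\<bar>"
    using e G0 by (auto intro: mult_left_le_one_le)
  moreover have "((1 + \<bar>D\<bar>) + (1 + G) * (1 + M)) * \<bar>h\<bar>
      = \<bar>h\<bar> + \<bar>D\<bar> * \<bar>h\<bar> + (1 + G) * \<bar>h\<bar> + M * ((1 + G) * \<bar>h\<bar>)"
    by (simp add: algebra_simps)
  ultimately show "\<bar>\<eta>\<^sub>h - \<eta> s\<bar> \<le> ((1 + \<bar>D\<bar>) + (1 + G) * (1 + M)) * \<bar>h\<bar>"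
    using R_lin L_rem unfolding \<rho>R_def[symmetric] \<rho>L_def[symmetric] abs_mult by linarith
qed

lemma err'_pointwise_bound:
  fixes h s :: real
  defines "y \<equiv> X s (\<alpha> + h)" and "z \<equiv> X s \<alpha>"
  defines "\<eta>\<^sub>h \<equiv> R 0 (\<alpha> + h) - L s y"
  assumes err_small: "\<bar>err h s\<bar> \<le> \<bar>h\<bar>"
    and K: "\<bar>deriv k_fun (\<eta> s)\<bar> \<le> K" and M: "\<bar>Lx (s, z)\<bar> \<le> M" and G: "\<bar>ratio s\<bar> \<le> G"
    and e: "0 \<le> e" "e \<le> 1"
    and R_lin: "\<bar>R 0 (\<alpha> + h) - R 0 \<alpha> - D * h\<bar> \<le> e * \<bar>h\<bar>"
    and L_lin: "\<bar>y - z\<bar> \<le> (1 + G) * \<bar>h\<bar> \<Longrightarrow>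
      \<bar>L s y - L s z - Lx (s, z) * (y - z)\<bar> \<le> e * \<bar>y - z\<bar>"
    and k_lin: "\<bar>\<eta>\<^sub>h - \<eta> s\<bar> \<le> ((1 + \<bar>D\<bar>) + (1 + G) * (1 + M)) * \<bar>h\<bar> \<Longrightarrow>
      \<bar>k_fun \<eta>\<^sub>h - k_fun (\<eta> s) - deriv k_fun (\<eta> s) * (\<eta>\<^sub>h - \<eta> s)\<bar> \<le> e * \<bar>\<eta>\<^sub>h - \<eta> s\<bar>"
  shows "\<bar>err' h s\<bar> \<le> K * M * \<bar>err h s\<bar>
    + e * (K * (2 + G) + ((1 + \<bar>D\<bar>) + (1 + G) * (1 + M))) * \<bar>h\<bar>"
proof -
  define \<rho>R where "\<rho>R = R 0 (\<alpha> + h) - R 0 \<alpha> - D * h"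
  define \<rho>L where "\<rho>L = L s y - L s z - Lx (s, z) * (y - z)"
  have K0: "0 \<le> K"
    using K by (auto intro: order_trans[OF abs_ge_zero])
  have increments: "\<bar>\<rho>L\<bar> \<le> e * ((1 + G) * \<bar>h\<bar>)"
    "\<bar>\<eta>\<^sub>h - \<eta> s\<bar> \<le> ((1 + \<bar>D\<bar>) + (1 + G) * (1 + M)) * \<bar>h\<bar>"
    using characteristic_increment_bounds[where h=h and s=s and M=M and G=G and e=e]
      err_small M G e R_lin L_lin
    unfolding \<rho>L_def y_def z_def \<eta>\<^sub>h_def by blast+
  have "\<bar>\<rho>R - \<rho>L - Lx (s, z) * err h s\<bar> \<le> \<bar>\<rho>R\<bar> + \<bar>\<rho>L\<bar> + \<bar>Lx (s, z)\<bar> * \<bar>err h s\<bar>"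
    unfolding abs_mult[symmetric] by arith
  then have "\<bar>\<rho>R - \<rho>L - Lx (s, z) * err h s\<bar> \<le> e * \<bar>h\<bar> + e * ((1 + G) * \<bar>h\<bar>) + M * \<bar>err h s\<bar>"
    using R_lin increments(1) mult_right_mono[OF M, of "\<bar>err h s\<bar>"]
    unfolding \<rho>R_def[symmetric] by linarith
  then have "\<bar>deriv k_fun (\<eta> s) * (\<rho>R - \<rho>L - Lx (s, z) * err h s)\<bar>
      \<le> K * (e * \<bar>h\<bar> + e * ((1 + G) * \<bar>h\<bar>) + M * \<bar>err h s\<bar>)"
    unfolding abs_mult using K K0 by (intro mult_mono) auto
  moreover have "err' h s = (k_fun \<eta>\<^sub>h - k_fun (\<eta> s) - deriv k_fun (\<eta> s) * (\<eta>\<^sub>h - \<eta> s))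
      + deriv k_fun (\<eta> s) * (\<rho>R - \<rho>L - Lx (s, z) * err h s)"
    unfolding err'_eq[of h s] by (simp add: \<rho>R_def \<rho>L_def y_def z_def \<eta>\<^sub>h_def)
  ultimately have "\<bar>err' h s\<bar> \<le> e * \<bar>\<eta>\<^sub>h - \<eta> s\<bar> + K * (e * \<bar>h\<bar> + e * ((1 + G) * \<bar>h\<bar>) + M * \<bar>err h s\<bar>)"
    using k_lin[OF increments(2)] by arith
  also have "\<dots> \<le> K * M * \<bar>err h s\<bar> + e * (K * (2 + G) + ((1 + \<bar>D\<bar>) + (1 + G) * (1 + M))) * \<bar>h\<bar>"
    using mult_left_mono[OF increments(2) e(1)] by (simp add: algebra_simps)
  finally show ?thesis .
qed

lemma characteristic_bounds:
  obtains N1 N2 K M G where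
    "\<And>s. s \<in> {0..t} \<Longrightarrow> \<bar>X s \<alpha>\<bar> \<le> N1" "\<And>s. s \<in> {0..t} \<Longrightarrow> \<bar>\<eta> s\<bar> \<le> N2"
    "\<And>s. s \<in> {0..t} \<Longrightarrow> \<bar>deriv k_fun (\<eta> s)\<bar> \<le> K"
    "\<And>s. s \<in> {0..t} \<Longrightarrow> \<bar>Lx (s, X s \<alpha>)\<bar> \<le> M" "\<And>s. s \<in> {0..t} \<Longrightarrow> \<bar>ratio s\<bar> \<le> G"
proof -
  have X_cont: "continuous_on {0..t} (\<lambda>s. X s \<alpha>)"
    using X_deriv_R0 by (rule DERIV_continuous_on)
  have \<eta>_cont: "continuous_on {0..t} \<eta>"
    using \<eta>_deriv by (rule DERIV_continuous_on)
  have kd_cont: "continuous_on {0..t} (\<lambda>s. deriv k_fun (\<eta> s))"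
    by (rule continuous_on_compose2[OF continuous_on_deriv_k_fun \<eta>_cont subset_UNIV])
  have Lx_cont': "continuous_on {0..t} (\<lambda>s. Lx (s, X s \<alpha>))"
    by (rule continuous_on_compose2[OF Lx_cont]) (auto intro!: continuous_intros X_cont)
  have ratio_cont: "continuous_on {0..t} ratio"
    using ratio_deriv by (rule DERIV_continuous_on)
  obtain N1 where "\<And>s. s \<in> {0..t} \<Longrightarrow> \<bar>X s \<alpha>\<bar> \<le> N1"
    using continuous_on_compact_bound[OF compact_Icc X_cont] by auto
  moreover obtain N2 where "\<And>s. s \<in> {0..t} \<Longrightarrow> \<bar>\<eta> s\<bar> \<le> N2"
    using continuous_on_compact_bound[OF compact_Icc \<eta>_cont] by auto
  moreover obtain K where "\<And>s. s \<in> {0..t} \<Longrightarrow> \<bar>deriv k_fun (\<eta> s)\<bar> \<le> K"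
    using continuous_on_compact_bound[OF compact_Icc kd_cont] by auto
  moreover obtain M where "\<And>s. s \<in> {0..t} \<Longrightarrow> \<bar>Lx (s, X s \<alpha>)\<bar> \<le> M"
    using continuous_on_compact_bound[OF compact_Icc Lx_cont'] by auto
  moreover obtain G where "\<And>s. s \<in> {0..t} \<Longrightarrow> \<bar>ratio s\<bar> \<le> G"
    using continuous_on_compact_bound[OF compact_Icc ratio_cont] by auto
  ultimately show ?thesis
    by (rule that)
qed

lemma err'_bound:
  assumes N1: "\<And>s. s \<in> {0..t} \<Longrightarrow> \<bar>X s \<alpha>\<bar> \<le> N1" and N2: "\<And>s. s \<in> {0..t} \<Longrightarrow> \<bar>\<eta> s\<bar> \<le> N2"
    and K: "\<And>s. s \<in> {0..t} \<Longrightarrow> \<bar>deriv k_fun (\<eta> s)\<bar> \<le> K"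
    and M: "\<And>s. s \<in> {0..t} \<Longrightarrow> \<bar>Lx (s, X s \<alpha>)\<bar> \<le> M" and G: "\<And>s. s \<in> {0..t} \<Longrightarrow> \<bar>ratio s\<bar> \<le> G"
    and e: "0 < e" "e \<le> 1"
  defines "V \<equiv> (1 + \<bar>D\<bar>) + (1 + G) * (1 + M)"
  shows "\<exists>\<delta>>0. \<forall>h s. \<bar>h\<bar> < \<delta> \<longrightarrow> s \<in> {0..t} \<longrightarrow> \<bar>err h s\<bar> \<le> \<bar>h\<bar> \<longrightarrow>
    \<bar>err' h s\<bar> \<le> K * M * \<bar>err h s\<bar> + e * (K * (2 + G) + V) * \<bar>h\<bar>"
proof -
  have G0: "0 \<le> G" and V: "0 < V"
    using G[of 0] M[of 0] t_nonneg by (auto simp: V_def intro!: add_pos_nonneg)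
  obtain \<delta>k where \<delta>k: "0 < \<delta>k" "\<And>s z y. s \<in> {0::real} \<Longrightarrow> \<bar>z\<bar> \<le> N2 \<Longrightarrow> \<bar>y - z\<bar> < \<delta>k \<Longrightarrow>
      \<bar>k_fun y - k_fun z - deriv k_fun (snd (s, z)) * (y - z)\<bar> \<le> e * \<bar>y - z\<bar>"
    by (rule uniform_linearization[of "{0}" "\<lambda>_. k_fun" "\<lambda>p. deriv k_fun (snd p)"])
       (auto intro!: continuous_on_compose2[OF continuous_on_deriv_k_fun] continuous_intros
             k_fun_has_deriv e)
  obtain \<delta>L where \<delta>L: "0 < \<delta>L" "\<And>s z y. s \<in> {0..t} \<Longrightarrow> \<bar>z\<bar> \<le> N1 \<Longrightarrow> \<bar>y - z\<bar> < \<delta>L \<Longrightarrow>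
      \<bar>L s y - L s z - Lx (s, z) * (y - z)\<bar> \<le> e * \<bar>y - z\<bar>"
    using uniform_linearization[where N=N1, OF compact_Icc
          has_partial_derivatives_on_slice[OF L_partials] Lx_cont e(1)] by metis
  obtain \<delta>R where \<delta>R: "0 < \<delta>R" "\<And>h. \<bar>h\<bar> < \<delta>R \<Longrightarrow> \<bar>R 0 (\<alpha> + h) - R 0 \<alpha> - D * h\<bar> \<le> e * \<bar>h\<bar>"
    using R0_deriv e(1) unfolding has_field_derivative_def has_derivative_at_alt
    by (metis add_diff_cancel_left' mult.commute real_norm_def)
  show ?thesis
  proof (intro exI[of _ "min \<delta>R (min (\<delta>L / (1 + G)) (\<delta>k / V))"] conjI allI impI)
    show "0 < min \<delta>R (min (\<delta>L / (1 + G)) (\<delta>k / V))"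
      using \<delta>R \<delta>L \<delta>k V G0 by simp
    fix h s assume h: "\<bar>h\<bar> < min \<delta>R (min (\<delta>L / (1 + G)) (\<delta>k / V))"
      and s: "s \<in> {0..t}" and small: "\<bar>err h s\<bar> \<le> \<bar>h\<bar>"
    have "(1 + G) * \<bar>h\<bar> < \<delta>L" "V * \<bar>h\<bar> < \<delta>k"
      using h G0 V by (simp_all add: field_simps)
    then show "\<bar>err' h s\<bar> \<le> K * M * \<bar>err h s\<bar> + e * (K * (2 + G) + V) * \<bar>h\<bar>"
      unfolding V_def using h by (intro err'_pointwise_bound[OF small K[OF s] M[OF s] G[OF s] less_imp_le[OF e(1)] e(2)]
          \<delta>R(2) \<delta>L(2)[OF s N1[OF s]] \<delta>k(2)[of 0, OF _ N2[OF s], simplified]) (auto simp: V_def)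
  qed
qed

lemma err_small:
  assumes "0 < \<epsilon>"
  obtains \<delta> where "0 < \<delta>" "\<And>h. \<bar>h\<bar> < \<delta> \<Longrightarrow> \<bar>err h t\<bar> \<le> \<epsilon> * \<bar>h\<bar>"
proof -
  obtain N1 N2 K M G where bounds:
    "\<And>s. s \<in> {0..t} \<Longrightarrow> \<bar>X s \<alpha>\<bar> \<le> N1" "\<And>s. s \<in> {0..t} \<Longrightarrow> \<bar>\<eta> s\<bar> \<le> N2"
    "\<And>s. s \<in> {0..t} \<Longrightarrow> \<bar>deriv k_fun (\<eta> s)\<bar> \<le> K"
    "\<And>s. s \<in> {0..t} \<Longrightarrow> \<bar>Lx (s, X s \<alpha>)\<bar> \<le> M" "\<And>s. s \<in> {0..t} \<Longrightarrow> \<bar>ratio s\<bar> \<le> G"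
    using characteristic_bounds by blast
  define A where "A = K * M"
  define C where "C = K * (2 + G) + ((1 + \<bar>D\<bar>) + (1 + G) * (1 + M))"
  define \<Gamma> where "\<Gamma> = exp ((2 * A + 1) * t)"
  have "0 \<le> K" "0 \<le> M" "0 \<le> G"
    using bounds(3-5)[of 0] t_nonneg by (auto intro: order_trans[OF abs_ge_zero])
  then have A: "0 \<le> A" and C: "0 \<le> C"
    by (simp_all add: A_def C_def)
  obtain e where e: "0 < e" "e \<le> 1" and \<Gamma>eC: "\<Gamma> * (e * C) \<le> min \<epsilon> 1 / 2"
    using small_factor_exists[of \<Gamma> C \<epsilon>] C assms by (auto simp: \<Gamma>_def)
  obtain \<delta> where \<delta>: "0 < \<delta>" "\<And>h s. \<bar>h\<bar> < \<delta> \<Longrightarrow> s \<in> {0..t} \<Longrightarrow> \<bar>err h s\<bar> \<le> \<bar>h\<bar> \<Longrightarrow>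
      \<bar>err' h s\<bar> \<le> A * \<bar>err h s\<bar> + e * C * \<bar>h\<bar>"
    using err'_bound[OF bounds e] unfolding A_def C_def by blast
  have "\<bar>err h t\<bar> \<le> \<epsilon> * \<bar>h\<bar>" if h: "\<bar>h\<bar> < \<delta>" for h
  proof (cases "h = 0")
    case True
    then show ?thesis
      by (simp add: err_def)
  next
    case False
    have "\<Gamma> * (e * C * \<bar>h\<bar>) \<le> min \<epsilon> 1 / 2 * \<bar>h\<bar>"
      using mult_right_mono[OF \<Gamma>eC abs_ge_zero[of h]] by (simp add: algebra_simps)
    moreover have "min \<epsilon> 1 / 2 * \<bar>h\<bar> < \<bar>h\<bar>" "min \<epsilon> 1 / 2 * \<bar>h\<bar> \<le> \<epsilon> * \<bar>h\<bar>"
      using assms False by (auto intro: mult_right_mono)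
    moreover have "\<bar>err h t\<bar> \<le> \<Gamma> * (e * C * \<bar>h\<bar>)"
      unfolding \<Gamma>_def
    proof (rule gronwall_continuation[where E="err h" and E'="err' h" and \<rho>="\<bar>h\<bar>"])
      show "exp ((2 * A + 1) * t) * (e * C * \<bar>h\<bar>) < \<bar>h\<bar>"
        using calculation by (simp add: \<Gamma>_def)
      show "\<bar>err' h s\<bar> \<le> A * \<bar>err h s\<bar> + e * C * \<bar>h\<bar>" if "s \<in> {0..t}" "\<bar>err h s\<bar> \<le> \<bar>h\<bar>" for s
        using \<delta>(2) h that by blast
    qed (use A e C t_nonneg err_init err_deriv in auto)
    ultimately show ?thesis
      by linarith
  qed
  with \<delta>(1) show ?thesis
    by (rule that)
qed

lemma flow_has_derivative: "((\<lambda>a. X t a) has_real_derivative ratio t) (at \<alpha>)"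
  unfolding has_field_derivative_def has_derivative_at_alt
proof (intro conjI allI impI bounded_linear_mult_right)
  fix \<epsilon> :: real assume "0 < \<epsilon>"
  then obtain \<delta> where \<delta>: "0 < \<delta>" "\<And>h. \<bar>h\<bar> < \<delta> \<Longrightarrow> \<bar>err h t\<bar> \<le> \<epsilon> * \<bar>h\<bar>"
    using err_small by blast
  have "\<bar>X t y - X t \<alpha> - ratio t * (y - \<alpha>)\<bar> \<le> \<epsilon> * \<bar>y - \<alpha>\<bar>" if "\<bar>y - \<alpha>\<bar> < \<delta>" for y
    using \<delta>(2)[OF that] by (simp add: err_def mult.commute)
  with \<delta>(1) show "\<exists>d>0. \<forall>y. norm (y - \<alpha>) < d \<longrightarrow>
      norm (X t y - X t \<alpha> - ratio t * (y - \<alpha>)) \<le> \<epsilon> * norm (y - \<alpha>)"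
    by auto
qed

theorem forward_compression_ratio:
  "((\<lambda>a. X t a) has_real_derivative
     sqrt (k_fun (R 0 \<alpha> - L t (X t \<alpha>)) / k_fun (R 0 \<alpha> - L 0 \<alpha>)) *
     (1 + D * sqrt (k_fun (R 0 \<alpha> - L 0 \<alpha>)) *
          integral {0..t} (\<lambda>\<tau>. f_fun (R 0 \<alpha> - L \<tau> (X \<tau> \<alpha>))))) (at \<alpha>)"
  using flow_has_derivative by (simp add: ratio_def \<eta>_def X_init)

end

text \<open>The reflection \<open>x \<mapsto> - x\<close> swaps the roles of \<open>R\<close> and \<open>L\<close> and turns backward
  characteristics into forward ones; it preserves the system because \<open>k\<close> is even.\<close>

lemma (in diagonal_system) reflected_diagonal_system:
  "diagonal_system t (\<lambda>s x. L s (- x)) (\<lambda>s x. R s (- x))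
     (\<lambda>p. Lt (fst p, - snd p)) (\<lambda>p. - Lx (fst p, - snd p))
     (\<lambda>p. Rt (fst p, - snd p)) (\<lambda>p. - Rx (fst p, - snd p))"
proof -
  have flip: "(\<lambda>p. (fst p, - snd p)) ` ({0..t} \<times> UNIV) \<subseteq> {0..t} \<times> (UNIV :: real set)"
    by auto
  have cont: "continuous_on ({0..t} \<times> UNIV) (\<lambda>p. - F (fst p, - snd p))"
    if "continuous_on ({0..t} \<times> UNIV) F" for F :: "real \<times> real \<Rightarrow> real"
    by (intro continuous_intros continuous_on_compose2[OF that _ flip])
  show ?thesis
    using t_nonneg has_partial_derivatives_on_reflect[OF L_partials]
      has_partial_derivatives_on_reflect[OF R_partials] cont[OF Lx_cont] cont[OF Rx_cont]
      L_equation R_equation k_fun_diff_commute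
    by unfold_locales (auto simp: algebra_simps)
qed

lemma (in diagonal_system) backward_compression_ratio:
  assumes Y_init: "\<And>b. Y 0 b = b"
    and Y_deriv: "\<And>b s. s \<in> {0..t} \<Longrightarrow>
      ((\<lambda>\<tau>. Y \<tau> b) has_real_derivative - k_fun (R s (Y s b) - L s (Y s b))) (at s within {0..t})"
    and L0_deriv: "(L 0 has_real_derivative D) (at \<beta>)"
  shows "((\<lambda>b. Y t b) has_real_derivative
     sqrt (k_fun (R t (Y t \<beta>) - L 0 \<beta>) / k_fun (R 0 \<beta> - L 0 \<beta>)) *
     (1 + D * sqrt (k_fun (R 0 \<beta> - L 0 \<beta>)) *
          integral {0..t} (\<lambda>\<tau>. f_fun (R \<tau> (Y \<tau> \<beta>) - L 0 \<beta>)))) (at \<beta>)"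
proof -
  interpret reflected: diagonal_system t "\<lambda>s x. L s (- x)" "\<lambda>s x. R s (- x)"
    "\<lambda>p. Lt (fst p, - snd p)" "\<lambda>p. - Lx (fst p, - snd p)"
    "\<lambda>p. Rt (fst p, - snd p)" "\<lambda>p. - Rx (fst p, - snd p)"
    by (rule reflected_diagonal_system)
  interpret reflected: forward_characteristic_at t "\<lambda>s x. L s (- x)" "\<lambda>s x. R s (- x)"
    "\<lambda>p. Lt (fst p, - snd p)" "\<lambda>p. - Lx (fst p, - snd p)"
    "\<lambda>p. Rt (fst p, - snd p)" "\<lambda>p. - Rx (fst p, - snd p)" "\<lambda>s a. - Y s (- a)" "- \<beta>" "- D"
  proof unfold_locales
    show "- Y 0 (- a) = a" for a
      by (simp add: Y_init)
    show "((\<lambda>\<tau>. - Y \<tau> (- a)) has_real_derivative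
        k_fun (L s (- (- Y s (- a))) - R s (- (- Y s (- a))))) (at s within {0..t})"
      if "s \<in> {0..t}" for a s
      using DERIV_minus[OF Y_deriv[OF that, of "- a"]] by (simp add: k_fun_diff_commute)
    show "((\<lambda>x. L 0 (- x)) has_real_derivative - D) (at (- \<beta>))"
      using L0_deriv DERIV_mirror[of "L 0" D "- \<beta>"] by simp
  qed
  have "((\<lambda>a. - Y t (- a)) has_real_derivative
      sqrt (k_fun (L 0 \<beta> - R t (Y t \<beta>)) / k_fun (L 0 \<beta> - R 0 \<beta>)) *
      (1 + - D * sqrt (k_fun (L 0 \<beta> - R 0 \<beta>)) *
           integral {0..t} (\<lambda>\<tau>. f_fun (L 0 \<beta> - R \<tau> (Y \<tau> \<beta>))))) (at (- \<beta>))"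
    (is "(_ has_real_derivative ?F) _")
    using reflected.forward_compression_ratio by simp
  from DERIV_minus[OF iffD1[OF DERIV_mirror this]]
  have "((\<lambda>b. Y t b) has_real_derivative ?F) (at \<beta>)"
    by simp
  then show ?thesis
    by (simp add: k_fun_diff_commute f_fun_diff_commute[of "L 0 \<beta>"])
qed

section \<open>Solutions of system (D)\<close>

lemma Dom_Icc_subset: "t \<in> Dom T \<Longrightarrow> {0..t} \<subseteq> Dom T"
  unfolding Dom_def by (auto intro: le_less_trans[of _ "ereal t"])

lemma solD_imp_diagonal_system:
  assumes sol: "solD r0 l0 T r l" and t: "t \<in> Dom T"
  obtains rt rx lt lx where "diagonal_system t r l rt rx lt lx" "r 0 = r0" "l 0 = l0"
proof -
  from sol obtain rt rx lt lx where
    cont: "continuous_on (Dom T \<times> UNIV) rx" "continuous_on (Dom T \<times> UNIV) lx"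
    and pde: "\<forall>p \<in> Dom T \<times> UNIV.
       ((\<lambda>q. r (fst q) (snd q)) has_derivative (\<lambda>h. rt p * fst h + rx p * snd h)) (at p within Dom T \<times> UNIV) \<and>
       ((\<lambda>q. l (fst q) (snd q)) has_derivative (\<lambda>h. lt p * fst h + lx p * snd h)) (at p within Dom T \<times> UNIV) \<and>
       rt p + k_fun (r (fst p) (snd p) - l (fst p) (snd p)) * rx p = 0 \<and>
       lt p - k_fun (r (fst p) (snd p) - l (fst p) (snd p)) * lx p = 0"
    and init: "\<forall>x. r 0 x = r0 x \<and> l 0 x = l0 x"
    unfolding solD_def by blast
  have sub: "{0..t} \<times> UNIV \<subseteq> Dom T \<times> UNIV"
    using Dom_Icc_subset[OF t] by auto
  have "diagonal_system t r l rt rx lt lx"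
  proof
    show "0 \<le> t"
      using t by (simp add: Dom_def)
    have "has_partial_derivatives_on r rt rx (Dom T)" "has_partial_derivatives_on l lt lx (Dom T)"
      using pde unfolding has_partial_derivatives_on_def by blast+
    then show "has_partial_derivatives_on r rt rx {0..t}" "has_partial_derivatives_on l lt lx {0..t}"
      using Dom_Icc_subset[OF t] by (blast intro: has_partial_derivatives_on_subset)+
  qed (use cont pde sub in \<open>auto intro: continuous_on_subset\<close>)
  moreover have "r 0 = r0" "l 0 = l0"
    using init by auto
  ultimately show ?thesis
    by (rule that)
qed

lemma has_real_derivative_within_Dom_Icc:
  "(f has_real_derivative D) (at s within Dom T) \<Longrightarrow> t \<in> Dom T \<Longrightarrow> s \<in> {0..t} \<Longrightarrow>
    (f has_real_derivative D) (at s within {0..t})"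
  using Dom_Icc_subset has_field_derivative_subset by blast

lemma L_fun_comp_differentiable:
  fixes f :: "real \<Rightarrow> real"
  assumes "f differentiable (at x)"
  shows "(\<lambda>x. L_fun (f x)) differentiable (at x)"
proof -
  from assms obtain D where "(f has_real_derivative D) (at x)"
    by (auto simp: real_differentiable_def)
  from DERIV_chain2[OF L_fun_has_real_derivative this] show ?thesis
    by (auto simp: real_differentiable_def)
qed

theorem mainTheorem4:
  fixes w0 :: "real \<Rightarrow> real"
    and r l x1 x2 :: "real \<Rightarrow> real \<Rightarrow> real"
    and tstar :: ereal
  defines "r0 \<equiv> (\<lambda>x. - L_fun (deriv w0 x))"
      and "l0 \<equiv> (\<lambda>x. L_fun (deriv w0 x))"
  assumes w0_C2: "\<forall>x. w0 differentiable (at x)" "\<forall>x. deriv w0 differentiable (at x)"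
               "continuous_on UNIV (deriv (deriv w0))"
    and w0'_bdd: "bounded (range (deriv w0))"
    and w0'_nonconst: "\<not> (\<exists>c. \<forall>x. deriv w0 x = c)"
    and tstar_pos: "0 < tstar"
    and sol: "solD r0 l0 tstar r l"
    and maximal: "\<forall>T'. tstar < T' \<longrightarrow> \<not> (\<exists>r' l'. solD r0 l0 T' r' l')"
    and char1: "\<forall>\<alpha>. x1 0 \<alpha> = \<alpha> \<and>
       (\<forall>s \<in> Dom tstar. ((\<lambda>\<tau>. x1 \<tau> \<alpha>) has_real_derivative
           k_fun (r s (x1 s \<alpha>) - l s (x1 s \<alpha>))) (at s within Dom tstar))"
    and char2: "\<forall>\<beta>. x2 0 \<beta> = \<beta> \<and>
       (\<forall>s \<in> Dom tstar. ((\<lambda>\<tau>. x2 \<tau> \<beta>) has_real_derivative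
           - k_fun (r s (x2 s \<beta>) - l s (x2 s \<beta>))) (at s within Dom tstar))"
  shows "\<forall>t \<in> Dom tstar. \<forall>\<alpha> \<beta>.
     ((\<lambda>a. x1 t a) has_real_derivative
        sqrt (k_fun (r0 \<alpha> - l t (x1 t \<alpha>)) / k_fun (2 * r0 \<alpha>)) *
        (1 + deriv r0 \<alpha> * sqrt (k_fun (2 * r0 \<alpha>)) *
             integral {0..t} (\<lambda>\<tau>. f_fun (r0 \<alpha> - l \<tau> (x1 \<tau> \<alpha>))))) (at \<alpha>) \<and>
     ((\<lambda>b. x2 t b) has_real_derivative
        sqrt (k_fun (r t (x2 t \<beta>) - l0 \<beta>) / k_fun (2 * r0 \<beta>)) *
        (1 + deriv l0 \<beta> * sqrt (k_fun (2 * r0 \<beta>)) *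
             integral {0..t} (\<lambda>\<tau>. f_fun (r \<tau> (x2 \<tau> \<beta>) - l0 \<beta>)))) (at \<beta>)"
proof (intro ballI allI conjI)
  fix t \<alpha> \<beta> assume t: "t \<in> Dom tstar"
  obtain rt rx lt lx where sys: "diagonal_system t r l rt rx lt lx" and init: "r 0 = r0" "l 0 = l0"
    using solD_imp_diagonal_system[OF sol t] by blast
  interpret diagonal_system t r l rt rx lt lx
    by (rule sys)
  have r0_l0: "r0 x - l0 x = 2 * r0 x" "l0 x - r0 x = - (2 * r0 x)" for x
    by (simp_all add: r0_def l0_def)
  have l0_deriv: "(l0 has_real_derivative deriv l0 x) (at x)"
    and r0_deriv: "(r0 has_real_derivative deriv r0 x) (at x)" for x
    using L_fun_comp_differentiable[of "deriv w0" x] w0_C2(2)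
    by (simp_all add: l0_def r0_def DERIV_deriv_iff_real_differentiable)
  have x2_deriv: "((\<lambda>\<tau>. x2 \<tau> b) has_real_derivative - k_fun (r s (x2 s b) - l s (x2 s b)))
      (at s within {0..t})" if "s \<in> {0..t}" for s b
    using char2 Dom_Icc_subset[OF t] that by (blast intro: has_real_derivative_within_Dom_Icc[OF _ t])
  interpret forward_characteristic_at t r l rt rx lt lx x1 \<alpha> "deriv r0 \<alpha>"
    using char1 r0_deriv init Dom_Icc_subset[OF t]
    by unfold_locales (auto intro!: has_real_derivative_within_Dom_Icc[OF _ t])
  show "((\<lambda>a. x1 t a) has_real_derivative
        sqrt (k_fun (r0 \<alpha> - l t (x1 t \<alpha>)) / k_fun (2 * r0 \<alpha>)) *
        (1 + deriv r0 \<alpha> * sqrt (k_fun (2 * r0 \<alpha>)) *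
             integral {0..t} (\<lambda>\<tau>. f_fun (r0 \<alpha> - l \<tau> (x1 \<tau> \<alpha>))))) (at \<alpha>)"
    using forward_compression_ratio by (simp add: init r0_l0)
  show "((\<lambda>b. x2 t b) has_real_derivative
        sqrt (k_fun (r t (x2 t \<beta>) - l0 \<beta>) / k_fun (2 * r0 \<beta>)) *
        (1 + deriv l0 \<beta> * sqrt (k_fun (2 * r0 \<beta>)) *
             integral {0..t} (\<lambda>\<tau>. f_fun (r \<tau> (x2 \<tau> \<beta>) - l0 \<beta>)))) (at \<beta>)"
    using backward_compression_ratio[of x2 "deriv l0 \<beta>" \<beta>] char2 l0_deriv x2_deriv
    by (simp add: init r0_l0)
qed

end
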